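(* For every $n>3$ and every $\alpha\in\{28,32,44,140\}$, the sensitivity to synchronism of elementary cellular automaton rule $\alpha$ satisfies $\mu(f_{\alpha,n})=\dfrac{2^n-1}{3^n-2^{n+1}+2}$.
   Context: Cells are indexed by $\mathbb{Z}_n=\{0,\dots,n-1\}$, indices modulo $n$. The local rules are $r_{28}(x_1,x_2,x_3)=(\neg x_1\wedge x_2)\vee(x_1\wedge\neg x_2\wedge\neg x_3)$, $r_{32}=x_1\wedge\neg x_2\wedge x_3$, $r_{44}=(\neg x_1\wedge x_2)\vee(x_1\wedge\neg x_2\wedge x_3)$, $r_{140}=x_2\wedge(\neg x_1\vee x_3)$. The global function is $f_{\alpha,n}(x)_i=r_\alpha(x_{i-1},x_i,x_{i+1})$. An update schedule is an ordered partition $\Delta=(\Delta_1,\dots,\Delta_k)$ of $\mathbb{Z}_n$ into nonempty blocks; $\mathcal{P}_n$ is the set of them. For a block $B$ let $f^{(B)}(x)_i=f_{\alpha,n}(x)_i$ if $i\in B$ and $x_i$ otherwise; $f^{(\Delta)}_{\alpha,n}=f^{(\Delta_k)}\circ\cdots\circ f^{(\Delta_1)}$. The dynamics of $\Delta$ is the transition digraph with arcs $(x,f^{(\Delta)}_{\alpha,n}(x))$; $\mathcal{D}(f_{\alpha,n})$ is the set of distinct dynamics over $\Delta\in\mathcal{P}_n$. The sensitivity to synchronism is $\mu(f_{\alpha,n})=|\mathcal{D}(f_{\alpha,n})|/(3^n-2^{n+1}+2)$. *)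

theory Defs
  imports Complex_Main
begin

definition eca_rule :: "nat \<Rightarrow> bool \<Rightarrow> bool \<Rightarrow> bool \<Rightarrow> bool" where
  "eca_rule \<alpha> x1 x2 x3 =
     (if \<alpha> = 28 then (\<not> x1 \<and> x2) \<or> (x1 \<and> \<not> x2 \<and> \<not> x3)
      else if \<alpha> = 32 then x1 \<and> \<not> x2 \<and> x3
      else if \<alpha> = 44 then (\<not> x1 \<and> x2) \<or> (x1 \<and> \<not> x2 \<and> x3)
      else if \<alpha> = 140 then x2 \<and> (\<not> x1 \<or> x3)
      else undefined)"

definition configs :: "nat \<Rightarrow> bool list set" where
  "configs n = {x. length x = n}"

definition global_fun :: "nat \<Rightarrow> nat \<Rightarrow> bool list \<Rightarrow> bool list" where
  "global_fun \<alpha> n x =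
     map (\<lambda>i. eca_rule \<alpha> (x ! ((i + n - 1) mod n)) (x ! i) (x ! ((i + 1) mod n))) [0..<n]"

definition block_update :: "nat \<Rightarrow> nat \<Rightarrow> nat set \<Rightarrow> bool list \<Rightarrow> bool list" where
  "block_update \<alpha> n B x =
     map (\<lambda>i. if i \<in> B then global_fun \<alpha> n x ! i else x ! i) [0..<n]"

definition schedules :: "nat \<Rightarrow> nat set list set" where
  "schedules n = {\<Delta>. (\<forall>B \<in> set \<Delta>. B \<noteq> {}) \<and>
                      (\<forall>i < length \<Delta>. \<forall>j < length \<Delta>. i \<noteq> j \<longrightarrow> \<Delta> ! i \<inter> \<Delta> ! j = {}) \<and>
                      \<Union> (set \<Delta>) = {0..<n}}"

definition sched_update :: "nat \<Rightarrow> nat \<Rightarrow> nat set list \<Rightarrow> bool list \<Rightarrow> bool list" where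
  "sched_update \<alpha> n \<Delta> x = foldl (\<lambda>y B. block_update \<alpha> n B y) x \<Delta>"

definition dynamics :: "nat \<Rightarrow> nat \<Rightarrow> nat set list \<Rightarrow> (bool list \<times> bool list) set" where
  "dynamics \<alpha> n \<Delta> = {(x, sched_update \<alpha> n \<Delta> x) | x. x \<in> configs n}"

definition all_dynamics :: "nat \<Rightarrow> nat \<Rightarrow> (bool list \<times> bool list) set set" where
  "all_dynamics \<alpha> n = dynamics \<alpha> n ` schedules n"

definition sensitivity :: "nat \<Rightarrow> nat \<Rightarrow> real" where
  "sensitivity \<alpha> n = real (card (all_dynamics \<alpha> n)) / (3 ^ n - 2 ^ (n + 1) + 2)"

end

theory Submission
  imports Defs
begin

text \<open>Let \<open>\<rho> j\<close> be the index of the block containing cell \<open>j\<close>. The image \<open>F\<close> of \<open>x\<close> under the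
  block-sequential update is the unique solution of \<open>F i = r (y (i - 1)) (x i) (y (i + 1))\<close>, where
  \<open>y j = F j\<close> if \<open>\<rho> j < \<rho> i\<close> and \<open>y j = x j\<close> otherwise. For each of the four rules only one
  neighbour of a cell can pass on an updated value that makes a difference (for rule 32 an updated
  neighbour on either side forces the cell to 0), so \<open>F\<close> depends on the schedule only through one
  bit per cell, the signature. For \<open>n > 3\<close> two schedules with different signatures are told apart
  by an explicit configuration. The signatures are exactly the bit vectors that are not constantly
  true (the cells of the first block never see updated neighbours), so there are \<open>2 ^ n - 1\<close>
  distinct dynamics.\<close>

definition left_cell :: "nat \<Rightarrow> nat \<Rightarrow> nat" where
  "left_cell n i = (i + n - 1) mod n"

definition right_cell :: "nat \<Rightarrow> nat \<Rightarrow> nat" where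
  "right_cell n i = (i + 1) mod n"

lemma left_cell_eq: "i < n \<Longrightarrow> left_cell n i = (if i = 0 then n - 1 else i - 1)"
  by (cases i) (auto simp: left_cell_def)

lemma right_cell_eq: "i < n \<Longrightarrow> right_cell n i = (if i = n - 1 then 0 else i + 1)"
  by (auto simp: right_cell_def)

lemma left_cell_lt: "i < n \<Longrightarrow> left_cell n i < n"
  by (auto simp: left_cell_eq)

lemma right_cell_lt: "i < n \<Longrightarrow> right_cell n i < n"
  by (auto simp: right_cell_eq)

lemma right_left_cell [simp]: "i < n \<Longrightarrow> right_cell n (left_cell n i) = i"
  by (auto simp: left_cell_eq right_cell_eq)

lemma left_right_cell [simp]: "i < n \<Longrightarrow> left_cell n (right_cell n i) = i"
  by (auto simp: left_cell_eq right_cell_eq)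

definition block_of :: "nat set list \<Rightarrow> nat \<Rightarrow> nat" where
  "block_of \<Delta> j = (SOME m. m < length \<Delta> \<and> j \<in> \<Delta> ! m)"

lemma block_of_in:
  assumes "m < length \<Delta>" "j \<in> \<Delta> ! m"
  shows "block_of \<Delta> j < length \<Delta> \<and> j \<in> \<Delta> ! block_of \<Delta> j"
  unfolding block_of_def by (rule someI[of _ m]) (use assms in simp)

lemma block_of_eqI:
  assumes "\<Delta> \<in> schedules n" "m < length \<Delta>" "j \<in> \<Delta> ! m"
  shows "block_of \<Delta> j = m"
proof (rule ccontr)
  assume "block_of \<Delta> j \<noteq> m"
  moreover have "block_of \<Delta> j < length \<Delta>" "j \<in> \<Delta> ! block_of \<Delta> j"
    using block_of_in[OF assms(2,3)] by auto
  ultimately have "j \<in> \<Delta> ! block_of \<Delta> j \<inter> \<Delta> ! m"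
    using assms(3) by simp
  moreover have "\<Delta> ! block_of \<Delta> j \<inter> \<Delta> ! m = {}"
    using assms(1) \<open>block_of \<Delta> j \<noteq> m\<close> \<open>block_of \<Delta> j < length \<Delta>\<close> assms(2)
    unfolding schedules_def by blast
  ultimately show False
    by simp
qed

lemma block_exists:
  assumes "\<Delta> \<in> schedules n" "j < n"
  obtains m where "m < length \<Delta>" "j \<in> \<Delta> ! m"
proof -
  have "j \<in> \<Union> (set \<Delta>)"
    using assms unfolding schedules_def by auto
  then show ?thesis
    using that by (metis UnionE in_set_conv_nth)
qed

lemma block_of_lt:
  assumes "\<Delta> \<in> schedules n" "j < n"
  shows "block_of \<Delta> j < length \<Delta>"
  using block_exists[OF assms] block_of_eqI[OF assms(1)] by metis

lemma in_block_iff: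
  assumes "\<Delta> \<in> schedules n" "j < n" "m < length \<Delta>"
  shows "j \<in> \<Delta> ! m \<longleftrightarrow> block_of \<Delta> j = m"
  using block_exists[OF assms(1,2)] block_of_eqI[OF assms(1)] assms(3) by metis

text \<open>With \<open>\<rho>\<close> the block index, \<open>visible \<rho> x F i j\<close> is the value of cell \<open>j\<close> at the moment
  cell \<open>i\<close> is updated, if \<open>F\<close> is the final configuration.\<close>

definition visible :: "(nat \<Rightarrow> nat) \<Rightarrow> bool list \<Rightarrow> bool list \<Rightarrow> nat \<Rightarrow> nat \<Rightarrow> bool" where
  "visible \<rho> x F i j = (if \<rho> j < \<rho> i then F ! j else x ! j)"

definition update_equations :: "nat \<Rightarrow> nat \<Rightarrow> (nat \<Rightarrow> nat) \<Rightarrow> bool list \<Rightarrow> bool list \<Rightarrow> bool" where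
  "update_equations \<alpha> n \<rho> x F \<longleftrightarrow> length F = n \<and>
     (\<forall>i<n. F ! i = eca_rule \<alpha> (visible \<rho> x F i (left_cell n i)) (x ! i) (visible \<rho> x F i (right_cell n i)))"

lemma length_block_update [simp]: "length (block_update \<alpha> n B y) = n"
  by (simp add: block_update_def)

lemma block_update_nth:
  "i < n \<Longrightarrow> block_update \<alpha> n B y ! i =
     (if i \<in> B then eca_rule \<alpha> (y ! left_cell n i) (y ! i) (y ! right_cell n i) else y ! i)"
  by (simp add: block_update_def global_fun_def left_cell_def right_cell_def)

lemma sched_update_prefix:
  fixes \<alpha> n :: nat and \<Delta> :: "nat set list" and x :: "bool list"
  assumes \<Delta>: "\<Delta> \<in> schedules n" and x: "length x = n" and m: "m \<le> length \<Delta>"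
  defines "Y \<equiv> \<lambda>m. foldl (\<lambda>y B. block_update \<alpha> n B y) x (take m \<Delta>)"
  shows "length (Y m) = n \<and> (\<forall>j<n. Y m ! j = (if block_of \<Delta> j < m
           then eca_rule \<alpha> (visible (block_of \<Delta>) x (Y m) j (left_cell n j)) (x ! j)
                          (visible (block_of \<Delta>) x (Y m) j (right_cell n j))
           else x ! j))"
  using m
proof (induction m)
  case 0
  then show ?case
    using x by (simp add: Y_def)
next
  case (Suc m)
  let ?\<rho> = "block_of \<Delta>"
  have IH: "length (Y m) = n" "\<And>j. j < n \<Longrightarrow> Y m ! j = (if ?\<rho> j < m
           then eca_rule \<alpha> (visible ?\<rho> x (Y m) j (left_cell n j)) (x ! j)
                          (visible ?\<rho> x (Y m) j (right_cell n j))
           else x ! j)"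
    using Suc by auto
  have step: "Y (Suc m) = block_update \<alpha> n (\<Delta> ! m) (Y m)"
    using Suc.prems by (simp add: Y_def take_Suc_conv_app_nth)
  have unchanged: "Y (Suc m) ! j = Y m ! j" if "j < n" "?\<rho> j \<noteq> m" for j
    using that step block_update_nth in_block_iff[OF \<Delta>] Suc.prems by auto
  have visible_step: "visible ?\<rho> x (Y (Suc m)) j k = visible ?\<rho> x (Y m) j k"
    if "k < n" "?\<rho> j \<le> m" for j k
    using that unchanged by (auto simp: visible_def)
  have visible_now: "Y m ! k = visible ?\<rho> x (Y m) j k" if "k < n" "?\<rho> j = m" for j k
    using that IH(2)[of k] by (auto simp: visible_def)
  have "Y (Suc m) ! j = (if ?\<rho> j < Suc m
           then eca_rule \<alpha> (visible ?\<rho> x (Y (Suc m)) j (left_cell n j)) (x ! j)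
                          (visible ?\<rho> x (Y (Suc m)) j (right_cell n j))
           else x ! j)" if j: "j < n" for j
  proof (cases "?\<rho> j = m")
    case True
    then have "Y (Suc m) ! j = eca_rule \<alpha> (Y m ! left_cell n j) (Y m ! j) (Y m ! right_cell n j)"
      using j step block_update_nth in_block_iff[OF \<Delta> j] Suc.prems by simp
    then show ?thesis
      using True j IH(2)[OF j] visible_now visible_step left_cell_lt right_cell_lt by simp
  next
    case False
    then show ?thesis
      using j unchanged IH(2)[OF j] visible_step left_cell_lt right_cell_lt by auto
  qed
  then show ?case
    using IH(1) step by simp
qed

lemma sched_update_equations:
  assumes "\<Delta> \<in> schedules n" "length x = n"
  shows "update_equations \<alpha> n (block_of \<Delta>) x (sched_update \<alpha> n \<Delta> x)"
  using sched_update_prefix[OF assms order.refl, of \<alpha>] block_of_lt[OF assms(1)]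
  unfolding update_equations_def sched_update_def by simp

lemma update_equationsD:
  "update_equations \<alpha> n \<rho> x F \<Longrightarrow> i < n \<Longrightarrow>
     F ! i = eca_rule \<alpha> (visible \<rho> x F i (left_cell n i)) (x ! i) (visible \<rho> x F i (right_cell n i))"
  unfolding update_equations_def by blast

lemma update_equations_at_left:
  assumes "update_equations \<alpha> n \<rho> x F" "i < n" "\<rho> (left_cell n i) < \<rho> i"
  shows "F ! left_cell n i =
    eca_rule \<alpha> (visible \<rho> x F (left_cell n i) (left_cell n (left_cell n i))) (x ! left_cell n i) (x ! i)"
  using update_equationsD[OF assms(1) left_cell_lt[OF assms(2)]] assms(2,3) by (simp add: visible_def)

lemma update_equations_at_right:
  assumes "update_equations \<alpha> n \<rho> x F" "i < n" "\<rho> (right_cell n i) < \<rho> i"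
  shows "F ! right_cell n i =
    eca_rule \<alpha> (x ! i) (x ! right_cell n i) (visible \<rho> x F (right_cell n i) (right_cell n (right_cell n i)))"
  using update_equationsD[OF assms(1) right_cell_lt[OF assms(2)]] assms(2,3) by (simp add: visible_def)

text \<open>For rules 28 and 44 an already updated right neighbour is read only when \<open>x ! i\<close> is false,
  and then it still holds its old value; symmetrically for rule 140 on the left.\<close>

lemma rule28_equation:
  assumes "update_equations 28 n \<rho> x F" "i < n"
  shows "F ! i = (if visible \<rho> x F i (left_cell n i) then \<not> x ! i \<and> \<not> x ! right_cell n i else x ! i)"
  using update_equationsD[OF assms] update_equations_at_right[OF assms]
  by (cases "\<rho> (right_cell n i) < \<rho> i") (auto simp: eca_rule_def visible_def)

lemma rule44_equation:
  assumes "update_equations 44 n \<rho> x F" "i < n"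
  shows "F ! i = (if visible \<rho> x F i (left_cell n i) then \<not> x ! i \<and> x ! right_cell n i else x ! i)"
  using update_equationsD[OF assms] update_equations_at_right[OF assms]
  by (cases "\<rho> (right_cell n i) < \<rho> i") (auto simp: eca_rule_def visible_def)

lemma rule140_equation:
  assumes "update_equations 140 n \<rho> x F" "i < n"
  shows "F ! i = (x ! i \<and> (\<not> x ! left_cell n i \<or> visible \<rho> x F i (right_cell n i)))"
  using update_equationsD[OF assms] update_equations_at_left[OF assms]
  by (cases "\<rho> (left_cell n i) < \<rho> i") (auto simp: eca_rule_def visible_def)

text \<open>A neighbour updated before cell \<open>i\<close> can be true only if \<open>x ! i\<close> is, and then cell \<open>i\<close>
  becomes false anyway.\<close>

lemma rule32_equation:
  assumes "update_equations 32 n \<rho> x F" "i < n"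
  shows "F ! i = (\<not> (\<rho> (left_cell n i) < \<rho> i \<or> \<rho> (right_cell n i) < \<rho> i) \<and>
                  x ! left_cell n i \<and> \<not> x ! i \<and> x ! right_cell n i)"
  using update_equationsD[OF assms] update_equations_at_left[OF assms] update_equations_at_right[OF assms]
  by (auto simp: eca_rule_def visible_def)

lemma rank_recursion_unique:
  fixes \<rho> :: "nat \<Rightarrow> nat"
  assumes "length F = n" "length G = n"
    and "\<And>i. i < n \<Longrightarrow> nb i < n" "\<And>i. i < n \<Longrightarrow> K i \<Longrightarrow> \<rho> (nb i) < \<rho> i"
    and "\<And>i. i < n \<Longrightarrow> F ! i = \<Phi> i (if K i then F ! nb i else c i)"
    and "\<And>i. i < n \<Longrightarrow> G ! i = \<Phi> i (if K i then G ! nb i else c i)"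
  shows "F = G"
proof (rule nth_equalityI)
  show "length F = length G"
    using assms(1,2) by simp
  fix i
  assume "i < length F"
  then have "i < n"
    using assms(1) by simp
  then show "F ! i = G ! i"
  proof (induction "\<rho> i" arbitrary: i rule: less_induct)
    case less
    then show ?case
      using assms(3-6)[of i] by (cases "K i") auto
  qed
qed

definition signature_bit :: "nat \<Rightarrow> nat \<Rightarrow> (nat \<Rightarrow> nat) \<Rightarrow> nat \<Rightarrow> bool" where
  "signature_bit \<alpha> n \<rho> i =
     (if \<alpha> = 140 then \<rho> (right_cell n i) < \<rho> i
      else if \<alpha> = 32 then \<rho> (left_cell n i) < \<rho> i \<or> \<rho> (right_cell n i) < \<rho> i
      else \<rho> (left_cell n i) < \<rho> i)"

definition signature :: "nat \<Rightarrow> nat \<Rightarrow> nat set list \<Rightarrow> bool list" where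
  "signature \<alpha> n \<Delta> = map (signature_bit \<alpha> n (block_of \<Delta>)) [0..<n]"

lemma update_equations_unique:
  assumes \<alpha>: "\<alpha> \<in> {28, 32, 44, 140}"
    and F1: "update_equations \<alpha> n \<rho>1 x F1" and F2: "update_equations \<alpha> n \<rho>2 x F2"
    and same: "\<And>i. i < n \<Longrightarrow> signature_bit \<alpha> n \<rho>1 i = signature_bit \<alpha> n \<rho>2 i"
  shows "F1 = F2"
proof -
  have len: "length F1 = n" "length F2 = n"
    using F1 F2 by (simp_all add: update_equations_def)
  consider "\<alpha> = 28" | "\<alpha> = 44" | "\<alpha> = 140" | "\<alpha> = 32"
    using \<alpha> by auto
  then show ?thesis
  proof cases
    case 1
    then have "\<rho>2 (left_cell n i) < \<rho>2 i \<longleftrightarrow> \<rho>1 (left_cell n i) < \<rho>1 i" if "i < n" for i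
      using same[OF that] by (simp add: signature_bit_def)
    then show ?thesis
      using len left_cell_lt rule28_equation[OF F1[unfolded 1]] rule28_equation[OF F2[unfolded 1]]
      by (intro rank_recursion_unique[where \<rho> = \<rho>1 and nb = "left_cell n"
            and K = "\<lambda>i. \<rho>1 (left_cell n i) < \<rho>1 i" and c = "\<lambda>i. x ! left_cell n i"
            and \<Phi> = "\<lambda>i v. if v then \<not> x ! i \<and> \<not> x ! right_cell n i else x ! i"])
        (simp_all add: visible_def split del: if_split)
  next
    case 2
    then have "\<rho>2 (left_cell n i) < \<rho>2 i \<longleftrightarrow> \<rho>1 (left_cell n i) < \<rho>1 i" if "i < n" for i
      using same[OF that] by (simp add: signature_bit_def)
    then show ?thesis
      using len left_cell_lt rule44_equation[OF F1[unfolded 2]] rule44_equation[OF F2[unfolded 2]]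
      by (intro rank_recursion_unique[where \<rho> = \<rho>1 and nb = "left_cell n"
            and K = "\<lambda>i. \<rho>1 (left_cell n i) < \<rho>1 i" and c = "\<lambda>i. x ! left_cell n i"
            and \<Phi> = "\<lambda>i v. if v then \<not> x ! i \<and> x ! right_cell n i else x ! i"])
        (simp_all add: visible_def split del: if_split)
  next
    case 3
    then have "\<rho>2 (right_cell n i) < \<rho>2 i \<longleftrightarrow> \<rho>1 (right_cell n i) < \<rho>1 i" if "i < n" for i
      using same[OF that] by (simp add: signature_bit_def)
    then show ?thesis
      using len right_cell_lt rule140_equation[OF F1[unfolded 3]] rule140_equation[OF F2[unfolded 3]]
      by (intro rank_recursion_unique[where \<rho> = \<rho>1 and nb = "right_cell n"
            and K = "\<lambda>i. \<rho>1 (right_cell n i) < \<rho>1 i" and c = "\<lambda>i. x ! right_cell n i"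
            and \<Phi> = "\<lambda>i v. x ! i \<and> (\<not> x ! left_cell n i \<or> v)"])
        (simp_all add: visible_def split del: if_split)
  next
    case 4
    show ?thesis
      using len rule32_equation[OF F1[unfolded 4]] rule32_equation[OF F2[unfolded 4]] same
      by (intro nth_equalityI) (auto simp: 4 signature_bit_def)
  qed
qed

lemma neighbour_cells_distinct:
  fixes n i :: nat
  assumes n: "3 < n" and i: "i < n"
  defines "l \<equiv> left_cell n" and "r \<equiv> right_cell n"
  shows "l i \<noteq> i" "r i \<noteq> i" "r i \<noteq> l i" "l (l i) \<noteq> i" "l (l i) \<noteq> l i" "l (l i) \<noteq> r i"
    "l (l (l i)) \<noteq> i" "l (l (l i)) \<noteq> l i" "l (l (l i)) \<noteq> l (l i)"
    "r (r i) \<noteq> i" "r (r i) \<noteq> r i" "r (r i) \<noteq> l i"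
    "n = 4 \<Longrightarrow> l (l (l i)) = r i"
    "4 < n \<Longrightarrow> l (l (l (l i))) \<noteq> i" "4 < n \<Longrightarrow> l (l (l (l i))) \<noteq> l (l i)"
proof -
  have l: "l j = (if 1 \<le> j then j - 1 else n + j - 1)" if "j < n" for j
    using that by (auto simp: l_def left_cell_eq)
  have l1: "l i = (if 1 \<le> i then i - 1 else n + i - 1)"
    using l[OF i] .
  have l2: "l (l i) = (if 2 \<le> i then i - 2 else n + i - 2)"
    using l1 l[of "l i"] n i by (auto split: if_splits)
  have l3: "l (l (l i)) = (if 3 \<le> i then i - 3 else n + i - 3)"
    using l2 l[of "l (l i)"] n i by (auto split: if_splits)
  have l4: "l (l (l (l i))) = (if 4 \<le> i then i - 4 else n + i - 4)"
    using l3 l[of "l (l (l i))"] n i by (auto split: if_splits)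
  have inj: "l a = l b \<Longrightarrow> a = b" if "a < n" "b < n" for a b
    using that by (metis right_left_cell l_def)
  have lr: "l (r i) = i" "l (r (r i)) = r i"
    using i by (simp_all add: l_def r_def right_cell_lt)
  show left_distinct: "l i \<noteq> i" "l (l i) \<noteq> i" "l (l i) \<noteq> l i" "l (l (l i)) \<noteq> l (l i)" "l (l (l i)) \<noteq> i"
    "l (l (l i)) \<noteq> l i"
    using l1 l2 l3 n i by auto
  show "4 < n \<Longrightarrow> l (l (l (l i))) \<noteq> i" "4 < n \<Longrightarrow> l (l (l (l i))) \<noteq> l (l i)"
    unfolding l4 by (unfold l2) (use i in auto)
  show "r i \<noteq> i" "l (l i) \<noteq> r i" "r (r i) \<noteq> i" "r (r i) \<noteq> r i" "r i \<noteq> l i" "r (r i) \<noteq> l i"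
    using left_distinct lr by metis+
  show "n = 4 \<Longrightarrow> l (l (l i)) = r i"
    using l4 lr i inj[of "l (l (l i))" "r i"] by (simp add: l_def r_def left_cell_lt right_cell_lt)
qed

definition config_of_set :: "nat \<Rightarrow> nat set \<Rightarrow> bool list" where
  "config_of_set n S = map (\<lambda>j. j \<in> S) [0..<n]"

lemma length_config_of_set [simp]: "length (config_of_set n S) = n"
  by (simp add: config_of_set_def)

lemma config_of_set_nth [simp]: "j < n \<Longrightarrow> config_of_set n S ! j \<longleftrightarrow> j \<in> S"
  by (simp add: config_of_set_def)

lemma rule28_separating_config:
  assumes n: "3 < n" and i: "i < n"
    and F1: "update_equations 28 n \<rho>1 x F1" and F2: "update_equations 28 n \<rho>2 x F2"
    and K1: "\<rho>1 (left_cell n i) < \<rho>1 i" and K2: "\<not> \<rho>2 (left_cell n i) < \<rho>2 i"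
    and x: "x = config_of_set n {left_cell n (left_cell n i)}"
  shows "F1 ! i \<noteq> F2 ! i"
proof -
  let ?l = "left_cell n i" and ?ll = "left_cell n (left_cell n i)"
    and ?lll = "left_cell n (left_cell n (left_cell n i))" and ?r = "right_cell n i"
  have lt: "?l < n" "?ll < n" "?lll < n" "?r < n"
    using i by (simp_all add: left_cell_lt right_cell_lt)
  have x_vals: "\<not> x ! ?l" "\<not> x ! i" "x ! ?ll" "\<not> x ! ?r" "\<not> x ! ?lll"
    unfolding x using lt i neighbour_cells_distinct[OF n i] by simp_all
  have left_true: "F ! ?l" if F: "update_equations 28 n \<rho> x F" for \<rho> F
  proof -
    have "\<not> F ! ?lll"
      using rule28_equation[OF F lt(3)] x_vals lt by (simp add: visible_def)
    then have "F ! ?ll"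
      using rule28_equation[OF F lt(2)] x_vals lt by (simp add: visible_def)
    then show "F ! ?l"
      using rule28_equation[OF F lt(1)] x_vals i by (simp add: visible_def)
  qed
  have "F1 ! i"
    using rule28_equation[OF F1 i] left_true[OF F1] x_vals K1 by (simp add: visible_def)
  moreover have "\<not> F2 ! i"
    using rule28_equation[OF F2 i] x_vals K2 by (simp add: visible_def)
  ultimately show ?thesis
    by blast
qed

text \<open>For rule 44 and \<open>n = 4\<close> no single configuration separates all pairs of schedules, hence
  the case distinction below.\<close>

lemma rule44_separating_config_fresh_left:
  assumes n: "3 < n" and i: "i < n"
    and F1: "update_equations 44 n \<rho>1 x F1" and F2: "update_equations 44 n \<rho>2 x F2"
    and K1: "\<rho>1 (left_cell n i) < \<rho>1 i" and K2: "\<not> \<rho>2 (left_cell n i) < \<rho>2 i"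
    and K1_left: "\<not> \<rho>1 (left_cell n (left_cell n i)) < \<rho>1 (left_cell n i)"
    and x: "x = config_of_set n {left_cell n (left_cell n i), left_cell n i, right_cell n i}"
  shows "F1 ! i \<noteq> F2 ! i"
proof -
  let ?l = "left_cell n i" and ?ll = "left_cell n (left_cell n i)" and ?r = "right_cell n i"
  have lt: "?l < n" "?ll < n" "?r < n"
    using i by (simp_all add: left_cell_lt right_cell_lt)
  have x_vals: "x ! ?l" "\<not> x ! i" "x ! ?ll" "x ! ?r"
    unfolding x using lt i neighbour_cells_distinct[OF n i] by simp_all
  have "\<not> F1 ! ?l"
    using rule44_equation[OF F1 lt(1)] x_vals K1_left i by (simp add: visible_def)
  then have "\<not> F1 ! i"
    using rule44_equation[OF F1 i] x_vals K1 by (simp add: visible_def)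
  moreover have "F2 ! i"
    using rule44_equation[OF F2 i] x_vals K2 by (simp add: visible_def)
  ultimately show ?thesis
    by blast
qed

lemma rule44_separating_config_ring4:
  assumes n: "n = 4" and i: "i < n"
    and F1: "update_equations 44 n \<rho>1 x F1" and F2: "update_equations 44 n \<rho>2 x F2"
    and K1: "\<rho>1 (left_cell n i) < \<rho>1 i" and K2: "\<not> \<rho>2 (left_cell n i) < \<rho>2 i"
    and K1_left: "\<rho>1 (left_cell n (left_cell n i)) < \<rho>1 (left_cell n i)"
    and x: "x = config_of_set n {left_cell n i, right_cell n i}"
  shows "F1 ! i \<noteq> F2 ! i"
proof -
  have n3: "3 < n"
    using n by simp
  let ?l = "left_cell n i" and ?ll = "left_cell n (left_cell n i)"
    and ?lll = "left_cell n (left_cell n (left_cell n i))" and ?r = "right_cell n i"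
  have lt: "?l < n" "?ll < n" "?r < n"
    using i by (simp_all add: left_cell_lt right_cell_lt)
  have x_vals: "x ! ?l" "\<not> x ! i" "\<not> x ! ?ll" "x ! ?r"
    unfolding x using lt i neighbour_cells_distinct[OF n3 i] by simp_all
  have ring: "?lll = ?r"
    using neighbour_cells_distinct(13)[OF n3 i n] by simp
  have "F1 ! ?ll"
  proof (cases "\<rho>1 ?lll < \<rho>1 ?ll")
    case True
    then have "\<not> \<rho>1 (left_cell n ?r) < \<rho>1 ?r"
      using K1 K1_left ring i by simp
    then have "F1 ! ?r"
      using rule44_equation[OF F1 lt(3)] x_vals i by (simp add: visible_def)
    then show ?thesis
      using rule44_equation[OF F1 lt(2)] x_vals lt True ring by (simp add: visible_def)
  next
    case False
    then show ?thesis
      using rule44_equation[OF F1 lt(2)] x_vals lt ring by (simp add: visible_def)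
  qed
  then have "\<not> F1 ! ?l"
    using rule44_equation[OF F1 lt(1)] x_vals i K1_left by (simp add: visible_def)
  then have "\<not> F1 ! i"
    using rule44_equation[OF F1 i] x_vals K1 by (simp add: visible_def)
  moreover have "F2 ! i"
    using rule44_equation[OF F2 i] x_vals K2 by (simp add: visible_def)
  ultimately show ?thesis
    by blast
qed

lemma rule44_separating_config_large:
  assumes n: "4 < n" and i: "i < n"
    and F1: "update_equations 44 n \<rho>1 x F1" and F2: "update_equations 44 n \<rho>2 x F2"
    and K1: "\<rho>1 (left_cell n i) < \<rho>1 i" and K2: "\<not> \<rho>2 (left_cell n i) < \<rho>2 i"
    and x: "x = config_of_set n {left_cell n (left_cell n i), i}"
  shows "F1 ! i \<noteq> F2 ! i"
proof -
  have n3: "3 < n"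
    using n by simp
  let ?l = "left_cell n i" and ?ll = "left_cell n (left_cell n i)"
    and ?lll = "left_cell n (left_cell n (left_cell n i))"
    and ?llll = "left_cell n (left_cell n (left_cell n (left_cell n i)))"
  have lt: "?l < n" "?ll < n" "?lll < n" "?llll < n"
    using i by (simp_all add: left_cell_lt)
  have x_vals: "\<not> x ! ?l" "x ! i" "x ! ?ll" "\<not> x ! ?lll" "\<not> x ! ?llll"
    unfolding x using lt i neighbour_cells_distinct[OF n3 i] n by simp_all
  have left_true: "F ! ?l" if F: "update_equations 44 n \<rho> x F" for \<rho> F
  proof -
    have "\<not> F ! ?llll"
      using rule44_equation[OF F lt(4)] x_vals lt by (simp add: visible_def)
    then have "\<not> F ! ?lll"
      using rule44_equation[OF F lt(3)] x_vals lt by (simp add: visible_def)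
    then have "F ! ?ll"
      using rule44_equation[OF F lt(2)] x_vals lt by (simp add: visible_def)
    then show "F ! ?l"
      using rule44_equation[OF F lt(1)] x_vals i by (simp add: visible_def)
  qed
  have "\<not> F1 ! i"
    using rule44_equation[OF F1 i] left_true[OF F1] x_vals K1 by (simp add: visible_def)
  moreover have "F2 ! i"
    using rule44_equation[OF F2 i] x_vals K2 by (simp add: visible_def)
  ultimately show ?thesis
    by blast
qed

lemma rule140_separating_config:
  assumes n: "3 < n" and i: "i < n"
    and F1: "update_equations 140 n \<rho>1 x F1" and F2: "update_equations 140 n \<rho>2 x F2"
    and K1: "\<rho>1 (right_cell n i) < \<rho>1 i" and K2: "\<not> \<rho>2 (right_cell n i) < \<rho>2 i"
    and x: "x = config_of_set n {left_cell n i, i, right_cell n i}"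
  shows "F1 ! i \<noteq> F2 ! i"
proof -
  let ?l = "left_cell n i" and ?r = "right_cell n i" and ?rr = "right_cell n (right_cell n i)"
  have lt: "?l < n" "?r < n" "?rr < n"
    using i by (simp_all add: left_cell_lt right_cell_lt)
  have x_vals: "x ! ?l" "x ! i" "x ! ?r" "\<not> x ! ?rr"
    unfolding x using lt i neighbour_cells_distinct[OF n i] by simp_all
  have "\<not> F1 ! ?rr"
    using rule140_equation[OF F1 lt(3)] x_vals by simp
  then have "\<not> F1 ! ?r"
    using rule140_equation[OF F1 lt(2)] x_vals i by (simp add: visible_def)
  then have "\<not> F1 ! i"
    using rule140_equation[OF F1 i] x_vals K1 by (simp add: visible_def)
  moreover have "F2 ! i"
    using rule140_equation[OF F2 i] x_vals K2 by (simp add: visible_def)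
  ultimately show ?thesis
    by blast
qed

lemma rule32_separating_config:
  assumes n: "3 < n" and i: "i < n"
    and F1: "update_equations 32 n \<rho>1 x F1" and F2: "update_equations 32 n \<rho>2 x F2"
    and K1: "\<rho>1 (left_cell n i) < \<rho>1 i \<or> \<rho>1 (right_cell n i) < \<rho>1 i"
    and K2: "\<not> (\<rho>2 (left_cell n i) < \<rho>2 i \<or> \<rho>2 (right_cell n i) < \<rho>2 i)"
    and x: "x = config_of_set n {left_cell n i, right_cell n i}"
  shows "F1 ! i \<noteq> F2 ! i"
proof -
  have x_vals: "x ! left_cell n i" "\<not> x ! i" "x ! right_cell n i"
    unfolding x using i neighbour_cells_distinct[OF n i] by (simp_all add: left_cell_lt right_cell_lt)
  show ?thesis
    using rule32_equation[OF F1 i] rule32_equation[OF F2 i] x_vals K1 K2 by simp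
qed

lemma separating_config_exists:
  assumes \<alpha>: "\<alpha> \<in> {28, 32, 44, 140}" and n: "3 < n" and i: "i < n"
    and K1: "signature_bit \<alpha> n \<rho>1 i" and K2: "\<not> signature_bit \<alpha> n \<rho>2 i"
  obtains x where "length x = n"
    "\<And>F1 F2. update_equations \<alpha> n \<rho>1 x F1 \<Longrightarrow> update_equations \<alpha> n \<rho>2 x F2 \<Longrightarrow> F1 ! i \<noteq> F2 ! i"
proof -
  consider "\<alpha> = 28" | "\<alpha> = 44" | "\<alpha> = 140" | "\<alpha> = 32"
    using \<alpha> by auto
  then show thesis
  proof cases
    case 1
    then have "\<rho>1 (left_cell n i) < \<rho>1 i" "\<not> \<rho>2 (left_cell n i) < \<rho>2 i"
      using K1 K2 by (simp_all add: signature_bit_def)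
    from length_config_of_set rule28_separating_config[OF n i _ _ this refl] show thesis
      by (rule that[unfolded 1])
  next
    case 2
    then have K: "\<rho>1 (left_cell n i) < \<rho>1 i" "\<not> \<rho>2 (left_cell n i) < \<rho>2 i"
      using K1 K2 by (simp_all add: signature_bit_def)
    consider "\<not> \<rho>1 (left_cell n (left_cell n i)) < \<rho>1 (left_cell n i)"
      | "\<rho>1 (left_cell n (left_cell n i)) < \<rho>1 (left_cell n i)" "n = 4" | "4 < n"
      using n by fastforce
    then show thesis
    proof cases
      case 1
      from length_config_of_set rule44_separating_config_fresh_left[OF n i _ _ K 1 refl] show thesis
        by (rule that[unfolded \<open>\<alpha> = 44\<close>])
    next
      case 2
      from length_config_of_set rule44_separating_config_ring4[OF 2(2) i _ _ K 2(1) refl] show thesis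
        by (rule that[unfolded \<open>\<alpha> = 44\<close>])
    next
      case 3
      from length_config_of_set rule44_separating_config_large[OF 3 i _ _ K refl] show thesis
        by (rule that[unfolded \<open>\<alpha> = 44\<close>])
    qed
  next
    case 3
    then have "\<rho>1 (right_cell n i) < \<rho>1 i" "\<not> \<rho>2 (right_cell n i) < \<rho>2 i"
      using K1 K2 by (simp_all add: signature_bit_def)
    from length_config_of_set rule140_separating_config[OF n i _ _ this refl] show thesis
      by (rule that[unfolded 3])
  next
    case 4
    then have "\<rho>1 (left_cell n i) < \<rho>1 i \<or> \<rho>1 (right_cell n i) < \<rho>1 i"
      "\<not> (\<rho>2 (left_cell n i) < \<rho>2 i \<or> \<rho>2 (right_cell n i) < \<rho>2 i)"
      using K1 K2 by (simp_all add: signature_bit_def)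
    from length_config_of_set rule32_separating_config[OF n i _ _ this refl] show thesis
      by (rule that[unfolded 4])
  qed
qed

lemma dynamics_eq_iff:
  "dynamics \<alpha> n \<Delta>1 = dynamics \<alpha> n \<Delta>2 \<longleftrightarrow>
     (\<forall>x \<in> configs n. sched_update \<alpha> n \<Delta>1 x = sched_update \<alpha> n \<Delta>2 x)"
proof
  assume dyn: "dynamics \<alpha> n \<Delta>1 = dynamics \<alpha> n \<Delta>2"
  show "\<forall>x \<in> configs n. sched_update \<alpha> n \<Delta>1 x = sched_update \<alpha> n \<Delta>2 x"
  proof
    fix x
    assume "x \<in> configs n"
    then have "(x, sched_update \<alpha> n \<Delta>1 x) \<in> dynamics \<alpha> n \<Delta>2"
      using dyn unfolding dynamics_def by blast
    then show "sched_update \<alpha> n \<Delta>1 x = sched_update \<alpha> n \<Delta>2 x"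
      unfolding dynamics_def by blast
  qed
next
  assume "\<forall>x \<in> configs n. sched_update \<alpha> n \<Delta>1 x = sched_update \<alpha> n \<Delta>2 x"
  then show "dynamics \<alpha> n \<Delta>1 = dynamics \<alpha> n \<Delta>2"
    unfolding dynamics_def by (intro Collect_cong) auto
qed

lemma sched_updates_differ:
  assumes \<alpha>: "\<alpha> \<in> {28, 32, 44, 140}" and n: "3 < n"
    and \<Delta>: "\<Delta> \<in> schedules n" and \<Delta>': "\<Delta>' \<in> schedules n" and i: "i < n"
    and K: "signature_bit \<alpha> n (block_of \<Delta>) i" "\<not> signature_bit \<alpha> n (block_of \<Delta>') i"
  shows "\<exists>x \<in> configs n. sched_update \<alpha> n \<Delta> x \<noteq> sched_update \<alpha> n \<Delta>' x"
proof -
  obtain x where x: "length x = n" and sep: "\<And>F1 F2. update_equations \<alpha> n (block_of \<Delta>) x F1 \<Longrightarrow>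
      update_equations \<alpha> n (block_of \<Delta>') x F2 \<Longrightarrow> F1 ! i \<noteq> F2 ! i"
    using separating_config_exists[OF \<alpha> n i K] by blast
  have "sched_update \<alpha> n \<Delta> x ! i \<noteq> sched_update \<alpha> n \<Delta>' x ! i"
    by (rule sep[OF sched_update_equations[OF \<Delta> x] sched_update_equations[OF \<Delta>' x]])
  then show ?thesis
    using x unfolding configs_def by auto
qed

lemma dynamics_eq_iff_signature_eq:
  assumes \<alpha>: "\<alpha> \<in> {28, 32, 44, 140}" and n: "3 < n"
    and \<Delta>1: "\<Delta>1 \<in> schedules n" and \<Delta>2: "\<Delta>2 \<in> schedules n"
  shows "dynamics \<alpha> n \<Delta>1 = dynamics \<alpha> n \<Delta>2 \<longleftrightarrow> signature \<alpha> n \<Delta>1 = signature \<alpha> n \<Delta>2"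
proof
  assume sig: "signature \<alpha> n \<Delta>1 = signature \<alpha> n \<Delta>2"
  have same_bits: "signature_bit \<alpha> n (block_of \<Delta>1) i = signature_bit \<alpha> n (block_of \<Delta>2) i"
    if "i < n" for i
    using arg_cong[where f = "\<lambda>K. K ! i", OF sig] that by (simp add: signature_def)
  have "sched_update \<alpha> n \<Delta>1 x = sched_update \<alpha> n \<Delta>2 x" if "x \<in> configs n" for x
  proof -
    have x: "length x = n"
      using that by (simp add: configs_def)
    show ?thesis
      by (rule update_equations_unique[OF \<alpha> sched_update_equations[OF \<Delta>1 x]
            sched_update_equations[OF \<Delta>2 x] same_bits])
  qed
  then show "dynamics \<alpha> n \<Delta>1 = dynamics \<alpha> n \<Delta>2"
    unfolding dynamics_eq_iff by blast
next
  assume "dynamics \<alpha> n \<Delta>1 = dynamics \<alpha> n \<Delta>2"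
  then have same: "\<forall>x \<in> configs n. sched_update \<alpha> n \<Delta>1 x = sched_update \<alpha> n \<Delta>2 x"
    unfolding dynamics_eq_iff .
  have "signature_bit \<alpha> n (block_of \<Delta>1) i = signature_bit \<alpha> n (block_of \<Delta>2) i" if "i < n" for i
    using sched_updates_differ[OF \<alpha> n \<Delta>1 \<Delta>2 that] sched_updates_differ[OF \<alpha> n \<Delta>2 \<Delta>1 that] same
    by (cases "signature_bit \<alpha> n (block_of \<Delta>1) i") auto
  then show "signature \<alpha> n \<Delta>1 = signature \<alpha> n \<Delta>2"
    unfolding signature_def by simp
qed

lemma signature_bit_order_invariant:
  assumes "\<And>a b. a < n \<Longrightarrow> b < n \<Longrightarrow> \<rho>1 a < \<rho>1 b \<longleftrightarrow> \<rho>2 a < \<rho>2 b" "i < n"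
  shows "signature_bit \<alpha> n \<rho>1 i = signature_bit \<alpha> n \<rho>2 i"
  using assms left_cell_lt[OF assms(2)] right_cell_lt[OF assms(2)] unfolding signature_bit_def by simp

lemma schedule_realizing_order:
  fixes \<rho> :: "nat \<Rightarrow> nat"
  obtains \<Delta> where "\<Delta> \<in> schedules n"
    "\<And>a b. a < n \<Longrightarrow> b < n \<Longrightarrow> block_of \<Delta> a < block_of \<Delta> b \<longleftrightarrow> \<rho> a < \<rho> b"
proof -
  define vs where "vs = sorted_list_of_set (\<rho> ` {..<n})"
  define \<Delta> where "\<Delta> = map (\<lambda>v. {i. i < n \<and> \<rho> i = v}) vs"
  have set_vs: "set vs = \<rho> ` {..<n}" and strict: "sorted_wrt (<) vs"
    by (simp_all add: vs_def strict_sorted_list_of_set)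
  then have distinct: "distinct vs"
    by (simp add: vs_def)
  have \<Delta>: "\<Delta> \<in> schedules n"
    unfolding schedules_def
  proof (intro CollectI conjI ballI allI impI)
    fix B
    assume "B \<in> set \<Delta>"
    then show "B \<noteq> {}"
      using set_vs by (auto simp: \<Delta>_def)
  next
    fix a b
    assume "a < length \<Delta>" "b < length \<Delta>" "a \<noteq> b"
    then show "\<Delta> ! a \<inter> \<Delta> ! b = {}"
      using distinct by (auto simp: \<Delta>_def nth_eq_iff_index_eq)
  next
    show "\<Union> (set \<Delta>) = {0..<n}"
      using set_vs by (auto simp: \<Delta>_def)
  qed
  have block: "block_of \<Delta> j < length vs \<and> vs ! block_of \<Delta> j = \<rho> j" if "j < n" for j
  proof -
    have "\<rho> j \<in> set vs"
      using set_vs that by simp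
    then obtain a where a: "a < length vs" "vs ! a = \<rho> j"
      by (metis in_set_conv_nth)
    then have "block_of \<Delta> j = a"
      using that by (intro block_of_eqI[OF \<Delta>]) (simp_all add: \<Delta>_def)
    then show ?thesis
      using a by simp
  qed
  have mono: "vs ! a < vs ! b \<longleftrightarrow> a < b" if "a < length vs" "b < length vs" for a b
    using that sorted_wrt_nth_less[OF strict] by (metis less_asym linorder_neqE_nat)
  have "block_of \<Delta> a < block_of \<Delta> b \<longleftrightarrow> \<rho> a < \<rho> b" if "a < n" "b < n" for a b
    using block[OF that(1)] block[OF that(2)] mono by metis
  with \<Delta> show thesis
    by (rule that)
qed

lemma exists_not_signature_bit:
  assumes "0 < n"
  shows "\<exists>i<n. \<not> signature_bit \<alpha> n \<rho> i"
proof -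
  have "Min (\<rho> ` {..<n}) \<in> \<rho> ` {..<n}"
    using assms by (intro Min_in) auto
  then obtain i where i: "i < n" "\<rho> i = Min (\<rho> ` {..<n})"
    by auto
  then have "\<rho> i \<le> \<rho> j" if "j < n" for j
    using that by simp
  then show ?thesis
    using i left_cell_lt[OF i(1)] right_cell_lt[OF i(1)]
    by (auto simp: signature_bit_def not_less)
qed

lemma left_cell_offset:
  assumes "k < n" "j < n" "j \<noteq> k"
  shows "(left_cell n j + n - k) mod n < (j + n - k) mod n" "0 < (j + n - k) mod n"
  using assms by (auto simp: left_cell_eq mod_if)

lemma right_cell_offset:
  assumes "k < n" "j < n" "j \<noteq> k"
  shows "(k + n - right_cell n j) mod n < (k + n - j) mod n" "0 < (k + n - j) mod n"
  using assms by (auto simp: right_cell_eq mod_if)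

text \<open>Ranking each marked cell by its distance from the unmarked cell \<open>j0\<close> (measured leftwards for
  rule 140) lets every marked cell see its relevant neighbour updated first; unmarked cells come first.\<close>

lemma schedule_with_signature:
  assumes K: "length K = n" and j0: "j0 < n" "\<not> K ! j0"
  obtains \<Delta> where "\<Delta> \<in> schedules n" "signature \<alpha> n \<Delta> = K"
proof -
  define \<rho> where "\<rho> i = (if K ! i then if \<alpha> = 140 then (j0 + n - i) mod n else (i + n - j0) mod n else 0)"
    for i
  have bit: "signature_bit \<alpha> n \<rho> i = K ! i" if i: "i < n" for i
  proof (cases "K ! i")
    case True
    then have "i \<noteq> j0"
      using j0 by auto
    then show ?thesis
      using True left_cell_offset[OF j0(1) i] right_cell_offset[OF j0(1) i]
      by (auto simp: signature_bit_def \<rho>_def)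
  next
    case False
    then show ?thesis
      by (simp add: signature_bit_def \<rho>_def)
  qed
  obtain \<Delta> where \<Delta>: "\<Delta> \<in> schedules n"
    and order: "\<And>a b. a < n \<Longrightarrow> b < n \<Longrightarrow> block_of \<Delta> a < block_of \<Delta> b \<longleftrightarrow> \<rho> a < \<rho> b"
    using schedule_realizing_order by blast
  have "signature \<alpha> n \<Delta> = K"
    unfolding signature_def using K bit signature_bit_order_invariant[OF order]
    by (intro nth_equalityI) auto
  with \<Delta> show thesis
    by (rule that)
qed

lemma image_signature:
  assumes "0 < n"
  shows "signature \<alpha> n ` schedules n = {K. length K = n} - {replicate n True}"
proof (intro equalityI subsetI)
  fix K
  assume "K \<in> signature \<alpha> n ` schedules n"
  then obtain \<Delta> where "K = signature \<alpha> n \<Delta>"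
    by blast
  moreover obtain i where "i < n" "\<not> signature_bit \<alpha> n (block_of \<Delta>) i"
    using exists_not_signature_bit[OF assms] by blast
  ultimately have "length K = n" "\<not> K ! i"
    by (simp_all add: signature_def)
  moreover have "replicate n True ! i"
    using \<open>i < n\<close> by simp
  ultimately show "K \<in> {K. length K = n} - {replicate n True}"
    by auto
next
  fix K
  assume "K \<in> {K. length K = n} - {replicate n True}"
  then have K: "length K = n" and "K \<noteq> replicate n True"
    by auto
  then obtain j0 where "j0 < n" "\<not> K ! j0"
    by (metis in_set_conv_nth replicate_eqI)
  then show "K \<in> signature \<alpha> n ` schedules n"
    using schedule_with_signature[OF K] by (metis imageI)
qed

lemma card_bool_lists_not_all_true:
  "card ({K :: bool list. length K = n} - {replicate n True}) = 2 ^ n - 1"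
proof -
  have "card {K :: bool list. length K = n} = 2 ^ n"
    using card_lists_length_eq[of "UNIV :: bool set" n] by simp
  moreover have "finite {K :: bool list. length K = n}"
    using finite_lists_length_eq[of "UNIV :: bool set" n] by simp
  ultimately show ?thesis
    by (simp add: card_Diff_singleton)
qed

lemma card_image_eq_if_same_kernel:
  assumes "\<And>a b. a \<in> S \<Longrightarrow> b \<in> S \<Longrightarrow> f a = f b \<longleftrightarrow> g a = g b"
  shows "card (f ` S) = card (g ` S)"
proof -
  let ?P = "(\<lambda>a. (f a, g a)) ` S"
  have "f ` S = fst ` ?P" "g ` S = snd ` ?P"
    by (auto simp: image_image)
  moreover have "inj_on fst ?P" "inj_on snd ?P"
    using assms by (auto simp: inj_on_def)
  ultimately show ?thesis
    by (simp add: card_image)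
qed

theorem mainTheorem5:
  fixes n \<alpha> :: nat
  assumes "n > 3" and "\<alpha> \<in> {28, 32, 44, 140}"
  shows "sensitivity \<alpha> n = (2 ^ n - 1) / (3 ^ n - 2 ^ (n + 1) + 2)"
proof -
  have "card (all_dynamics \<alpha> n) = card (signature \<alpha> n ` schedules n)"
    unfolding all_dynamics_def
    by (intro card_image_eq_if_same_kernel dynamics_eq_iff_signature_eq assms(2,1))
  also have "\<dots> = 2 ^ n - 1"
    using image_signature[of n \<alpha>] card_bool_lists_not_all_true assms(1) by simp
  finally show ?thesis
    unfolding sensitivity_def by (simp add: of_nat_diff)
qed

end
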